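(* There exist instances of Bin Packing with Usage Cost for which $z_2^*>z_3^*$, where $z_2^*$ and $z_3^*$ are defined as follows. An instance consists of items whose distinct sizes are the positive integers $w'_1,\dots,w'_{n'}$, with $q_d\ge1$ items of size $w'_d$, and $m$ bins, bin $j$ having positive integer capacity $C_j$, fixed cost $f_j\ge 0$ and unit cost $c_j\ge 0$; $C_{\max}=\max_jC_j$. $z_2^*$ (cutting-stock relaxation): for each bin $j$, a pattern is an integer vector $g=(g_1,\dots,g_{n'})$ with $0\le g_d\le q_d$ and $\sum_d g_dw'_d\le C_j$; $I_j$ is the set of all patterns for bin $j$, the $i$-th pattern of bin $j$ being $(g_{1ij},\dots,g_{n'ij})$, with cost $co_{ij}=f_j+c_j\sum_d g_{dij}w'_d$ if nonzero and $co_{ij}=0$ if zero. $z_2^*=\min\sum_{j}\sum_{i\in I_j}co_{ij}p_{ij}$ subject to $\sum_{j}\sum_{i\in I_j}g_{dij}p_{ij}=q_d$ for all $d$, $\sum_{i\in I_j}p_{ij}=1$ for all $j$, $p_{ij}\ge0$. $z_3^*$ (arc-flow relaxation): let $I$ be the set of arcs $(a,a+w'_d)$ with $a\ge0$ integer and $a+w'_d\le C_{\max}$, with variables $x_{ab}\ge0$ for $(a,b)\in I$ and $y_{aj}\in[0,1]$ for each bin $j$ and $a\in\{0,\dots,C_{\max}\}$, with costs $co_{aj}=f_j+a\,c_j$ for $a>0$ and $co_{0j}=0$. $z_3^*=\min\sum_j\sum_{a}co_{aj}y_{aj}$ subject to: $\sum_{(a,b)\in I}x_{ab}-\sum_{(b,c)\in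 I}x_{bc}-\sum_j y_{bj}=0$ for every $b\in\{1,\dots,C_{\max}\}$; $-\sum_{(0,c)\in I}x_{0c}-\sum_j y_{0j}=-m$; $\sum_{a=0}^{C_j}y_{aj}=1$ for every $j$; $\sum_{(a,a+w'_d)\in I}x_{a,a+w'_d}=q_d$ for every $d$; $y_{aj}=0$ for all $j$ and $a\in\{C_j+1,\dots,C_{\max}\}$.
   Context: Bin Packing with Usage Cost: each item must be assigned to exactly one bin, the total size $l_j$ of the items in bin $j$ may not exceed $C_j$, a bin is used if it contains at least one item, a used bin $j$ costs $f_j+c_jl_j$, and the total cost is to be minimised. The two programs above are linear relaxations of exact integer formulations of this problem. *)

theory Defs
  imports Complex_Main
begin

definition valid_instance ::
  "nat \<Rightarrow> (nat \<Rightarrow> nat) \<Rightarrow> (nat \<Rightarrow> nat) \<Rightarrow> nat \<Rightarrow> (nat \<Rightarrow> nat) \<Rightarrow> (nat \<Rightarrow> real) \<Rightarrow> (nat \<Rightarrow> real) \<Rightarrow> bool"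
  where "valid_instance n' w q m C f c \<longleftrightarrow>
     m \<ge> 1 \<and> inj_on w {..<n'} \<and> (\<forall>d<n'. w d > 0 \<and> q d \<ge> 1) \<and>
     (\<forall>j<m. C j > 0 \<and> f j \<ge> 0 \<and> c j \<ge> 0)"

definition Cmax :: "nat \<Rightarrow> (nat \<Rightarrow> nat) \<Rightarrow> nat"
  where "Cmax m C = Max (C ` {..<m})"

definition patterns :: "nat \<Rightarrow> (nat \<Rightarrow> nat) \<Rightarrow> (nat \<Rightarrow> nat) \<Rightarrow> nat \<Rightarrow> (nat \<Rightarrow> nat) set"
  where "patterns n' w q Cj = {g. (\<forall>d<n'. g d \<le> q d) \<and> (\<forall>d\<ge>n'. g d = 0)
                                  \<and> (\<Sum>d<n'. g d * w d) \<le> Cj}"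

definition pattern_cost :: "nat \<Rightarrow> (nat \<Rightarrow> nat) \<Rightarrow> real \<Rightarrow> real \<Rightarrow> (nat \<Rightarrow> nat) \<Rightarrow> real"
  where "pattern_cost n' w fj cj g =
     (if (\<forall>d<n'. g d = 0) then 0 else fj + cj * real (\<Sum>d<n'. g d * w d))"

definition z2_feasible ::
  "nat \<Rightarrow> (nat \<Rightarrow> nat) \<Rightarrow> (nat \<Rightarrow> nat) \<Rightarrow> nat \<Rightarrow> (nat \<Rightarrow> nat) \<Rightarrow> (nat \<Rightarrow> (nat \<Rightarrow> nat) \<Rightarrow> real) \<Rightarrow> bool"
  where "z2_feasible n' w q m C p \<longleftrightarrow>
     (\<forall>j<m. \<forall>g\<in>patterns n' w q (C j). p j g \<ge> 0) \<and>
     (\<forall>d<n'. (\<Sum>j<m. \<Sum>g\<in>patterns n' w q (C j). real (g d) * p j g) = real (q d)) \<and>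
     (\<forall>j<m. (\<Sum>g\<in>patterns n' w q (C j). p j g) = 1)"

definition z2_obj ::
  "nat \<Rightarrow> (nat \<Rightarrow> nat) \<Rightarrow> (nat \<Rightarrow> nat) \<Rightarrow> nat \<Rightarrow> (nat \<Rightarrow> nat) \<Rightarrow> (nat \<Rightarrow> real) \<Rightarrow> (nat \<Rightarrow> real)
     \<Rightarrow> (nat \<Rightarrow> (nat \<Rightarrow> nat) \<Rightarrow> real) \<Rightarrow> real"
  where "z2_obj n' w q m C f c p =
     (\<Sum>j<m. \<Sum>g\<in>patterns n' w q (C j). pattern_cost n' w (f j) (c j) g * p j g)"

definition z2_star ::
  "nat \<Rightarrow> (nat \<Rightarrow> nat) \<Rightarrow> (nat \<Rightarrow> nat) \<Rightarrow> nat \<Rightarrow> (nat \<Rightarrow> nat) \<Rightarrow> (nat \<Rightarrow> real) \<Rightarrow> (nat \<Rightarrow> real) \<Rightarrow> real"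
  where "z2_star n' w q m C f c =
     Inf {z2_obj n' w q m C f c p | p. z2_feasible n' w q m C p}"

definition arcs :: "nat \<Rightarrow> (nat \<Rightarrow> nat) \<Rightarrow> nat \<Rightarrow> (nat \<times> nat) set"
  where "arcs n' w K = {(a, a + w d) | a d. d < n' \<and> a + w d \<le> K}"

definition arc_cost :: "real \<Rightarrow> real \<Rightarrow> nat \<Rightarrow> real"
  where "arc_cost fj cj a = (if a = 0 then 0 else fj + real a * cj)"

definition z3_feasible ::
  "nat \<Rightarrow> (nat \<Rightarrow> nat) \<Rightarrow> (nat \<Rightarrow> nat) \<Rightarrow> nat \<Rightarrow> (nat \<Rightarrow> nat)
     \<Rightarrow> (nat \<times> nat \<Rightarrow> real) \<Rightarrow> (nat \<Rightarrow> nat \<Rightarrow> real) \<Rightarrow> bool"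
  where "z3_feasible n' w q m C x y \<longleftrightarrow>
    (let K = Cmax m C; I = arcs n' w K in
     (\<forall>e\<in>I. x e \<ge> 0) \<and>
     (\<forall>j<m. \<forall>a\<le>K. 0 \<le> y a j \<and> y a j \<le> 1) \<and>
     (\<forall>b\<in>{1..K}. (\<Sum>e\<in>{e\<in>I. snd e = b}. x e) - (\<Sum>e\<in>{e\<in>I. fst e = b}. x e)
                    - (\<Sum>j<m. y b j) = 0) \<and>
     - (\<Sum>e\<in>{e\<in>I. fst e = 0}. x e) - (\<Sum>j<m. y 0 j) = - real m \<and>
     (\<forall>j<m. (\<Sum>a=0..C j. y a j) = 1) \<and>
     (\<forall>d<n'. (\<Sum>e\<in>{e\<in>I. snd e = fst e + w d}. x e) = real (q d)) \<and>
     (\<forall>j<m. \<forall>a. C j < a \<and> a \<le> K \<longrightarrow> y a j = 0))"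

definition z3_obj ::
  "nat \<Rightarrow> (nat \<Rightarrow> nat) \<Rightarrow> (nat \<Rightarrow> real) \<Rightarrow> (nat \<Rightarrow> real) \<Rightarrow> (nat \<Rightarrow> nat \<Rightarrow> real) \<Rightarrow> real"
  where "z3_obj m C f c y = (\<Sum>j<m. \<Sum>a=0..Cmax m C. arc_cost (f j) (c j) a * y a j)"

definition z3_star ::
  "nat \<Rightarrow> (nat \<Rightarrow> nat) \<Rightarrow> (nat \<Rightarrow> nat) \<Rightarrow> nat \<Rightarrow> (nat \<Rightarrow> nat) \<Rightarrow> (nat \<Rightarrow> real) \<Rightarrow> (nat \<Rightarrow> real) \<Rightarrow> real"
  where "z3_star n' w q m C f c =
     Inf {z3_obj m C f c y | x y. z3_feasible n' w q m C x y}"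

end

theory Submission
  imports Defs
begin

text \<open>The instance has a single item of size 1 and a single bin of capacity 2, with fixed
  cost 1 and unit cost 0. In the pattern model the bin must contain the item, so every
  feasible solution costs 1. The arc-flow model only counts arcs, not the paths they lie on:
  half a unit of flow along the path 0 \<rightarrow> 1 \<rightarrow> 2 uses two unit arcs of flow 1/2 each, which
  covers the demand of the item, while the other half of the bin stays empty at node 0.
  This costs only half the fixed cost.\<close>

lemma arc_cost_nonneg: "0 \<le> fj \<Longrightarrow> 0 \<le> cj \<Longrightarrow> 0 \<le> arc_cost fj cj a"
  by (simp add: arc_cost_def)

lemma z3_obj_nonneg:
  assumes "valid_instance n' w q m C f c" and "z3_feasible n' w q m C x y"
  shows "0 \<le> z3_obj m C f c y"
proof -
  have "\<forall>j<m. \<forall>a\<le>Cmax m C. 0 \<le> y a j"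
    using assms(2) by (simp add: z3_feasible_def Let_def)
  moreover have "\<forall>j<m. 0 \<le> f j \<and> 0 \<le> c j"
    using assms(1) by (simp add: valid_instance_def)
  ultimately show ?thesis
    unfolding z3_obj_def by (auto intro!: sum_nonneg mult_nonneg_nonneg arc_cost_nonneg)
qed

lemma z3_star_le_obj:
  assumes "valid_instance n' w q m C f c" and "z3_feasible n' w q m C x y"
  shows "z3_star n' w q m C f c \<le> z3_obj m C f c y"
  unfolding z3_star_def
proof (rule cInf_lower)
  show "z3_obj m C f c y \<in> {z3_obj m C f c y | x y. z3_feasible n' w q m C x y}"
    using assms(2) by blast
  show "bdd_below {z3_obj m C f c y | x y. z3_feasible n' w q m C x y}"
    using z3_obj_nonneg[OF assms(1)] by (auto intro: bdd_belowI[of _ 0])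
qed

lemma patterns_unit_item:
  assumes "1 \<le> Cj"
  shows "patterns 1 (\<lambda>_. 1) (\<lambda>_. 1) Cj = {\<lambda>_. 0, (\<lambda>_. 0)(0 := 1)}"
proof (intro set_eqI iffI)
  fix g assume "g \<in> patterns 1 (\<lambda>_. 1) (\<lambda>_. 1) Cj"
  then have "g 0 \<le> 1" and "\<forall>d\<ge>1. g d = 0" by (auto simp: patterns_def)
  then have "g = (\<lambda>_. 0)(0 := g 0)" and "g 0 = 0 \<or> g 0 = 1"
    by (auto simp: fun_eq_iff)
  then show "g \<in> {\<lambda>_. 0, (\<lambda>_. 0)(0 := 1)}" by auto
next
  fix g :: "nat \<Rightarrow> nat" assume "g \<in> {\<lambda>_. 0 :: nat, (\<lambda>_. 0)(0 := 1)}"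
  then show "g \<in> patterns 1 (\<lambda>_. 1) (\<lambda>_. 1) Cj"
    using assms by (auto simp: patterns_def)
qed

lemma z2_feasible_single_bin:
  "z2_feasible n' w q 1 C p \<longleftrightarrow>
     (\<forall>g\<in>patterns n' w q (C 0). p 0 g \<ge> 0) \<and>
     (\<forall>d<n'. (\<Sum>g\<in>patterns n' w q (C 0). real (g d) * p 0 g) = real (q d)) \<and>
     (\<Sum>g\<in>patterns n' w q (C 0). p 0 g) = 1"
  by (simp add: z2_feasible_def)

lemma z2_obj_single_bin:
  "z2_obj n' w q 1 C f c p = (\<Sum>g\<in>patterns n' w q (C 0). pattern_cost n' w (f 0) (c 0) g * p 0 g)"
  by (simp add: z2_obj_def)

lemma unit_pattern_nonzero: "(\<lambda>_. 0 :: nat) \<noteq> (\<lambda>_. 0)(0 := 1)"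
  by (metis fun_upd_same zero_neq_one)

lemma sum_unit_patterns:
  "(\<Sum>g\<in>{\<lambda>_. 0, (\<lambda>_. 0)(0 := 1)}. h g) = h (\<lambda>_. 0) + h ((\<lambda>_. 0 :: nat)(0 := 1))"
  using unit_pattern_nonzero by (subst sum.insert) auto

lemma z2_feasible_unit_item:
  assumes "1 \<le> C 0"
  shows "z2_feasible 1 (\<lambda>_. 1) (\<lambda>_. 1) 1 C (\<lambda>j g. if g = (\<lambda>_. 0)(0 := 1) then 1 else 0)"
  using unit_pattern_nonzero
  unfolding z2_feasible_single_bin patterns_unit_item[OF assms] sum_unit_patterns
  by simp

lemma z2_obj_unit_item:
  assumes "1 \<le> C 0" and "z2_feasible 1 (\<lambda>_. 1) (\<lambda>_. 1) 1 C p"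
  shows "z2_obj 1 (\<lambda>_. 1) (\<lambda>_. 1) 1 C f c p = f 0 + c 0"
proof -
  have "p 0 ((\<lambda>_. 0)(0 := 1)) = 1"
    using assms(2)
    unfolding z2_feasible_single_bin patterns_unit_item[OF assms(1)] sum_unit_patterns
    by simp
  then show ?thesis
    unfolding z2_obj_single_bin patterns_unit_item[OF assms(1)] sum_unit_patterns
    by (auto simp: pattern_cost_def)
qed

lemma z2_star_unit_item:
  assumes "1 \<le> C 0"
  shows "z2_star 1 (\<lambda>_. 1) (\<lambda>_. 1) 1 C f c = f 0 + c 0"
proof -
  obtain p where "z2_feasible 1 (\<lambda>_. 1) (\<lambda>_. 1) 1 C p"
    using z2_feasible_unit_item[of C, OF assms] by blast
  then have "{z2_obj 1 (\<lambda>_. 1) (\<lambda>_. 1) 1 C f c p | p. z2_feasible 1 (\<lambda>_. 1) (\<lambda>_. 1) 1 C p}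
               = {f 0 + c 0}"
    using z2_obj_unit_item[where C = C and f = f and c = c, OF assms]
    by (auto intro!: exI[of _ p])
  then show ?thesis by (simp add: z2_star_def)
qed

lemma Cmax_single_bin: "Cmax 1 C = C 0"
  by (simp add: Cmax_def lessThan_Suc)

lemma arcs_unit_item_capacity_two: "arcs 1 (\<lambda>_. 1) 2 = {(0, 1), (1, 2)}"
  unfolding arcs_def by auto

lemma z3_feasible_half_path:
  "z3_feasible 1 (\<lambda>_. 1) (\<lambda>_. 1) 1 (\<lambda>_. 2) (\<lambda>_. 1/2) (\<lambda>a j. if a = 0 \<or> a = 2 then 1/2 else 0)"
proof -
  have nodes: "{1..2::nat} = {1, 2}" "{0..2::nat} = {0, 1, 2}" by auto
  have "{e \<in> {(0::nat, 1::nat), (1, 2)}. snd e = 1} = {(0, 1)}"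
       "{e \<in> {(0::nat, 1::nat), (1, 2)}. snd e = 2} = {(1, 2)}"
       "{e \<in> {(0::nat, 1::nat), (1, 2)}. fst e = 0} = {(0, 1)}"
       "{e \<in> {(0::nat, 1::nat), (1, 2)}. fst e = 1} = {(1, 2)}"
       "{e \<in> {(0::nat, 1::nat), (1, 2)}. fst e = 2} = {}"
       "{e \<in> {(0::nat, 1::nat), (1, 2)}. snd e = fst e + 1} = {(0, 1), (1, 2)}"
    by auto
  then show ?thesis
    unfolding z3_feasible_def Let_def Cmax_single_bin arcs_unit_item_capacity_two nodes
    by auto
qed

lemma z3_obj_half_path:
  "z3_obj 1 (\<lambda>_. 2) f c (\<lambda>a j. if a = 0 \<or> a = 2 then 1/2 else 0) = (f 0 + 2 * c 0) / 2"
proof -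
  have "{0..2::nat} = {0, 1, 2}" by auto
  then show ?thesis
    unfolding z3_obj_def Cmax_single_bin by (simp add: arc_cost_def)
qed

theorem proposition4:
  "\<exists>n' w q m C f c.
     valid_instance n' w q m C f c \<and>
     (\<exists>p. z2_feasible n' w q m C p) \<and>
     (\<exists>x y. z3_feasible n' w q m C x y) \<and>
     z2_star n' w q m C f c > z3_star n' w q m C f c"
proof -
  let ?w = "\<lambda>_. 1 :: nat" and ?C = "\<lambda>_. 2 :: nat" and ?f = "\<lambda>_. 1 :: real" and ?c = "\<lambda>_. 0 :: real"
  have valid: "valid_instance 1 ?w ?w 1 ?C ?f ?c"
    by (simp add: valid_instance_def lessThan_Suc)
  obtain p where p: "z2_feasible 1 ?w ?w 1 ?C p"
    using z2_feasible_unit_item[of ?C] by auto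
  have "z3_star 1 ?w ?w 1 ?C ?f ?c \<le> 1/2"
    using z3_star_le_obj[OF valid z3_feasible_half_path] z3_obj_half_path[of ?f ?c] by simp
  also have "\<dots> < z2_star 1 ?w ?w 1 ?C ?f ?c"
    using z2_star_unit_item[of ?C ?f ?c] by simp
  finally show ?thesis
    using valid p z3_feasible_half_path by blast
qed

end
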